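(* Every Bohr regular Lawson paratopological group is a topological group.
   Context: All topological spaces are Hausdorff. A paratopological group is a group with a Hausdorff topology making multiplication continuous; a topological group additionally has continuous inversion. A paratopological group is Lawson if it has a neighborhood base at the unit consisting of subsemigroups. A topological group $K$ is totally bounded if for each neighborhood $U$ of the unit there is a finite $F$ with $FU=UF=K$. A continuous map $h:X\to Y$ is regular if for each $x\in X$ and neighborhood $U$ of $x$ there is a closed $F\subset Y$ such that $h^{-1}(F)$ is a closed neighborhood of $x$ contained in $U$. A paratopological group is Bohr regular if it admits a regular continuous homomorphism onto a totally bounded topological group. *)

theory Defs
  imports "HOL-Analysis.Analysis" "HOL-Algebra.Coset"
begin

definition nbhd :: "'a topology \<Rightarrow> 'a \<Rightarrow> 'a set \<Rightarrow> bool" where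
  "nbhd T x V \<longleftrightarrow> V \<subseteq> topspace T \<and> x \<in> T interior_of V"

definition paratopological_group :: "('a, 'm) monoid_scheme \<Rightarrow> 'a topology \<Rightarrow> bool" where
  "paratopological_group G T \<longleftrightarrow>
     group G \<and> topspace T = carrier G \<and> Hausdorff_space T \<and>
     continuous_map (prod_topology T T) T (\<lambda>p. fst p \<otimes>\<^bsub>G\<^esub> snd p)"

definition topological_group :: "('a, 'm) monoid_scheme \<Rightarrow> 'a topology \<Rightarrow> bool" where
  "topological_group G T \<longleftrightarrow>
     paratopological_group G T \<and> continuous_map T T (\<lambda>x. inv\<^bsub>G\<^esub> x)"

definition lawson_group :: "('a, 'm) monoid_scheme \<Rightarrow> 'a topology \<Rightarrow> bool" where
  "lawson_group G T \<longleftrightarrow>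
     paratopological_group G T \<and>
     (\<forall>U. nbhd T \<one>\<^bsub>G\<^esub> U \<longrightarrow>
        (\<exists>V. nbhd T \<one>\<^bsub>G\<^esub> V \<and> V \<subseteq> U \<and>
             (\<forall>x\<in>V. \<forall>y\<in>V. x \<otimes>\<^bsub>G\<^esub> y \<in> V)))"

definition totally_bounded_group :: "('a, 'm) monoid_scheme \<Rightarrow> 'a topology \<Rightarrow> bool" where
  "totally_bounded_group K S \<longleftrightarrow>
     topological_group K S \<and>
     (\<forall>U. nbhd S \<one>\<^bsub>K\<^esub> U \<longrightarrow>
        (\<exists>F. finite F \<and> F \<subseteq> carrier K \<and>
             F <#>\<^bsub>K\<^esub> U = carrier K \<and> U <#>\<^bsub>K\<^esub> F = carrier K))"

definition regular_map :: "'a topology \<Rightarrow> 'b topology \<Rightarrow> ('a \<Rightarrow> 'b) \<Rightarrow> bool" where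
  "regular_map X Y h \<longleftrightarrow>
     continuous_map X Y h \<and>
     (\<forall>x\<in>topspace X. \<forall>U. nbhd X x U \<longrightarrow>
        (\<exists>F. closedin Y F \<and>
             closedin X {z \<in> topspace X. h z \<in> F} \<and>
             nbhd X x {z \<in> topspace X. h z \<in> F} \<and>
             {z \<in> topspace X. h z \<in> F} \<subseteq> U))"

definition bohr_regular_via ::
  "('a, 'm) monoid_scheme \<Rightarrow> 'a topology \<Rightarrow> ('b, 'n) monoid_scheme \<Rightarrow> 'b topology \<Rightarrow> ('a \<Rightarrow> 'b) \<Rightarrow> bool" where
  "bohr_regular_via G T K S h \<longleftrightarrow>
     paratopological_group G T \<and> totally_bounded_group K S \<and>
     h \<in> hom G K \<and> h ` carrier G = carrier K \<and> regular_map T S h"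

end

theory Submission
  imports Defs
begin

text \<open>
  Let \<open>h : G \<rightarrow> K\<close> be a regular homomorphism onto a totally bounded group and \<open>U\<close> a
  neighbourhood of the unit of \<open>G\<close>. Regularity gives a closed \<open>F \<subseteq> K\<close> with \<open>h\<^sup>-\<^sup>1(F)\<close> a
  neighbourhood of the unit inside \<open>U\<close>, and the Lawson property a subsemigroup neighbourhood
  \<open>W \<subseteq> h\<^sup>-\<^sup>1(F)\<close>. For \<open>w \<in> W\<close> all positive powers of \<open>h(w)\<close> lie in \<open>F\<close>. In a totally bounded
  group the inverse of an element lies in the closure of its positive powers (a pigeonhole
  argument over a finite cover by translates of a small neighbourhood), so \<open>h(w\<^sup>-\<^sup>1) \<in> F\<close> and
  \<open>w\<^sup>-\<^sup>1 \<in> U\<close>. Thus inversion is continuous at the unit, hence everywhere by translation.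
\<close>

lemma paratopological_group_left_translation:
  assumes "paratopological_group G T" "a \<in> carrier G"
  shows "continuous_map T T (\<lambda>z. a \<otimes>\<^bsub>G\<^esub> z)"
proof -
  have mult: "continuous_map (prod_topology T T) T (\<lambda>p. fst p \<otimes>\<^bsub>G\<^esub> snd p)"
    and ts: "topspace T = carrier G"
    using assms(1) by (auto simp: paratopological_group_def)
  have "continuous_map T (prod_topology T T) (\<lambda>z. (a, z))"
    by (intro continuous_map_pairedI) (auto simp: ts assms(2))
  from continuous_map_compose[OF this mult] show ?thesis by (simp add: o_def)
qed

lemma paratopological_group_right_translation:
  assumes "paratopological_group G T" "a \<in> carrier G"
  shows "continuous_map T T (\<lambda>z. z \<otimes>\<^bsub>G\<^esub> a)"
proof -
  have mult: "continuous_map (prod_topology T T) T (\<lambda>p. fst p \<otimes>\<^bsub>G\<^esub> snd p)"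
    and ts: "topspace T = carrier G"
    using assms(1) by (auto simp: paratopological_group_def)
  have "continuous_map T (prod_topology T T) (\<lambda>z. (z, a))"
    by (intro continuous_map_pairedI) (auto simp: ts assms(2))
  from continuous_map_compose[OF this mult] show ?thesis by (simp add: o_def)
qed

lemma openin_preimage_translation:
  assumes "paratopological_group G T" "a \<in> carrier G" "openin T U"
  shows "openin T {z \<in> topspace T. a \<otimes>\<^bsub>G\<^esub> z \<in> U}"
    and "openin T {z \<in> topspace T. z \<otimes>\<^bsub>G\<^esub> a \<in> U}"
  using paratopological_group_left_translation[OF assms(1,2)]
    paratopological_group_right_translation[OF assms(1,2)] assms(3)
  by (simp_all add: continuous_map_def)

lemma (in monoid) nat_pow_in_subsemigroup:
  assumes "W \<subseteq> carrier G" "\<forall>x\<in>W. \<forall>y\<in>W. x \<otimes> y \<in> W" "w \<in> W" "(m::nat) \<ge> 1"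
  shows "w [^] m \<in> W"
  using assms(4)
proof (induction m rule: dec_induct)
  case base
  then show ?case using assms(1,3) by auto
next
  case (step m)
  then show ?case using assms(2,3) by simp
qed

lemma topological_group_division_continuous:
  assumes "topological_group K S"
  shows "continuous_map (prod_topology S S) S (\<lambda>p. inv\<^bsub>K\<^esub> (fst p) \<otimes>\<^bsub>K\<^esub> snd p)"
proof -
  have mult: "continuous_map (prod_topology S S) S (\<lambda>p. fst p \<otimes>\<^bsub>K\<^esub> snd p)"
    and inv: "continuous_map S S (\<lambda>x. inv\<^bsub>K\<^esub> x)"
    using assms by (auto simp: topological_group_def paratopological_group_def)
  have "continuous_map (prod_topology S S) (prod_topology S S) (\<lambda>p. (inv\<^bsub>K\<^esub> (fst p), snd p))"
    by (intro continuous_map_pairedI continuous_map_compose[OF continuous_map_fst inv, unfolded o_def]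
        continuous_map_snd)
  from continuous_map_compose[OF this mult] show ?thesis by (simp add: o_def)
qed

lemma topological_group_small_division_nbhd:
  assumes "topological_group K S" "openin S V" "\<one>\<^bsub>K\<^esub> \<in> V"
  obtains P where "openin S P" "\<one>\<^bsub>K\<^esub> \<in> P" "\<And>a b. a \<in> P \<Longrightarrow> b \<in> P \<Longrightarrow> inv\<^bsub>K\<^esub> a \<otimes>\<^bsub>K\<^esub> b \<in> V"
proof -
  interpret K: group K
    using assms(1) by (simp add: topological_group_def paratopological_group_def)
  have ts: "topspace S = carrier K"
    using assms(1) by (simp add: topological_group_def paratopological_group_def)
  define Q where "Q = {p \<in> topspace (prod_topology S S). inv\<^bsub>K\<^esub> (fst p) \<otimes>\<^bsub>K\<^esub> snd p \<in> V}"
  have Q_open: "openin (prod_topology S S) Q"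
    using topological_group_division_continuous[OF assms(1)] assms(2)
    by (simp add: Q_def continuous_map_def)
  have one_in_Q: "(\<one>\<^bsub>K\<^esub>, \<one>\<^bsub>K\<^esub>) \<in> Q"
    using assms(3) by (simp add: Q_def ts)
  obtain A B where AB: "openin S A" "openin S B" "\<one>\<^bsub>K\<^esub> \<in> A" "\<one>\<^bsub>K\<^esub> \<in> B" "A \<times> B \<subseteq> Q"
    using Q_open one_in_Q unfolding openin_prod_topology_alt by meson
  have "inv\<^bsub>K\<^esub> a \<otimes>\<^bsub>K\<^esub> b \<in> V" if "a \<in> A \<inter> B" "b \<in> A \<inter> B" for a b
  proof -
    have "(a, b) \<in> Q" using AB(5) that by blast
    then show ?thesis by (simp add: Q_def)
  qed
  with AB(1-4) show thesis
    by (intro that[of "A \<inter> B"]) (simp_all add: openin_Int)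
qed

text \<open>Pigeonhole: two of the first \<open>card F + 1\<close> powers of \<open>y\<close> lie in the same translate \<open>f P\<close>.\<close>

lemma totally_bounded_group_power_in_division_set:
  assumes "totally_bounded_group K S" "nbhd S \<one>\<^bsub>K\<^esub> P" "y \<in> carrier K"
  obtains d a b where "d \<ge> 1" "a \<in> P" "b \<in> P" "y [^]\<^bsub>K\<^esub> (d::nat) = inv\<^bsub>K\<^esub> a \<otimes>\<^bsub>K\<^esub> b"
proof -
  interpret K: group K
    using assms(1) by (simp add: totally_bounded_group_def topological_group_def paratopological_group_def)
  have Psub: "P \<subseteq> carrier K"
    using assms(1,2) by (simp add: nbhd_def totally_bounded_group_def topological_group_def paratopological_group_def)
  obtain F where F: "finite F" "F \<subseteq> carrier K" "F <#>\<^bsub>K\<^esub> P = carrier K"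
    using assms(1,2) unfolding totally_bounded_group_def by blast
  have "\<exists>f\<in>F. \<exists>p\<in>P. y [^]\<^bsub>K\<^esub> k = f \<otimes>\<^bsub>K\<^esub> p" for k :: nat
  proof -
    have "y [^]\<^bsub>K\<^esub> k \<in> F <#>\<^bsub>K\<^esub> P" using F(3) assms(3) by simp
    then show ?thesis unfolding set_mult_def by blast
  qed
  then obtain c where c: "\<And>k. c k \<in> F" "\<And>k::nat. \<exists>p\<in>P. y [^]\<^bsub>K\<^esub> k = c k \<otimes>\<^bsub>K\<^esub> p"
    by metis
  have "\<not> inj_on c {0..card F}"
  proof
    assume "inj_on c {0..card F}"
    from card_inj_on_le[OF this _ F(1)] c(1) have "card {0..card F} \<le> card F" by blast
    then show False by simp
  qed
  then obtain i j where ij: "i < j" "c i = c j"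
    unfolding inj_on_def by (metis linorder_neqE_nat)
  obtain a b where ab: "a \<in> P" "b \<in> P"
    "y [^]\<^bsub>K\<^esub> i = c i \<otimes>\<^bsub>K\<^esub> a" "y [^]\<^bsub>K\<^esub> j = c i \<otimes>\<^bsub>K\<^esub> b"
    using c(2)[of i] c(2)[of j] ij(2) by metis
  have carr: "c i \<in> carrier K" "a \<in> carrier K" "b \<in> carrier K"
    using c(1) F(2) ab(1,2) Psub by auto
  have "inv\<^bsub>K\<^esub> a \<otimes>\<^bsub>K\<^esub> b = inv\<^bsub>K\<^esub> (c i \<otimes>\<^bsub>K\<^esub> a) \<otimes>\<^bsub>K\<^esub> (c i \<otimes>\<^bsub>K\<^esub> b)"
    using carr by (simp add: K.inv_mult_group K.m_assoc) (simp add: K.m_assoc[symmetric])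
  also have "\<dots> = inv\<^bsub>K\<^esub> (y [^]\<^bsub>K\<^esub> i) \<otimes>\<^bsub>K\<^esub> (y [^]\<^bsub>K\<^esub> i \<otimes>\<^bsub>K\<^esub> y [^]\<^bsub>K\<^esub> (j - i))"
  proof -
    have "y [^]\<^bsub>K\<^esub> j = y [^]\<^bsub>K\<^esub> i \<otimes>\<^bsub>K\<^esub> y [^]\<^bsub>K\<^esub> (j - i)"
      using ij(1) assms(3) by (simp add: K.nat_pow_mult)
    then show ?thesis using ab(3,4) by simp
  qed
  also have "\<dots> = y [^]\<^bsub>K\<^esub> (j - i)"
    using assms(3) by (simp add: K.m_assoc[symmetric])
  finally show thesis
    using ij(1) ab(1,2) by (intro that[of "j - i" a b]) auto
qed

lemma totally_bounded_group_power_in_nbhd_of_inverse: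
  assumes tb: "totally_bounded_group K S" and y: "y \<in> carrier K"
    and V: "openin S V" "inv\<^bsub>K\<^esub> y \<in> V"
  obtains m :: nat where "m \<ge> 1" "y [^]\<^bsub>K\<^esub> m \<in> V"
proof -
  have tg: "topological_group K S" using tb by (simp add: totally_bounded_group_def)
  then have pg: "paratopological_group K S" by (simp add: topological_group_def)
  then interpret K: group K by (simp add: paratopological_group_def)
  have ts: "topspace S = carrier K" using pg by (simp add: paratopological_group_def)
  define V' where "V' = {g \<in> topspace S. inv\<^bsub>K\<^esub> y \<otimes>\<^bsub>K\<^esub> g \<in> V}"
  have "openin S V'"
    unfolding V'_def by (rule openin_preimage_translation(1)[OF pg K.inv_closed[OF y] V(1)])
  moreover have "\<one>\<^bsub>K\<^esub> \<in> V'" using V(2) y by (simp add: V'_def ts)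
  ultimately obtain P where P: "openin S P" "\<one>\<^bsub>K\<^esub> \<in> P"
    "\<And>a b. a \<in> P \<Longrightarrow> b \<in> P \<Longrightarrow> inv\<^bsub>K\<^esub> a \<otimes>\<^bsub>K\<^esub> b \<in> V'"
    using topological_group_small_division_nbhd[OF tg] by metis
  have "nbhd S \<one>\<^bsub>K\<^esub> P" using P(1,2) by (simp add: nbhd_def openin_subset interior_of_openin)
  \<comment> \<open>Even exponents, so that one factor \<open>y\<close> can be cancelled against \<open>inv y\<close>.\<close>
  then obtain d a b where d: "d \<ge> 1" "a \<in> P" "b \<in> P"
    "(y [^]\<^bsub>K\<^esub> (2::nat)) [^]\<^bsub>K\<^esub> (d::nat) = inv\<^bsub>K\<^esub> a \<otimes>\<^bsub>K\<^esub> b"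
    using totally_bounded_group_power_in_division_set[OF tb] y by (metis K.nat_pow_closed)
  have "y [^]\<^bsub>K\<^esub> (2 * d) \<in> V'" using P(3)[OF d(2,3)] d(4) y by (simp add: K.nat_pow_pow)
  then have "inv\<^bsub>K\<^esub> y \<otimes>\<^bsub>K\<^esub> y [^]\<^bsub>K\<^esub> (2 * d) \<in> V" by (simp add: V'_def)
  moreover have "inv\<^bsub>K\<^esub> y \<otimes>\<^bsub>K\<^esub> y [^]\<^bsub>K\<^esub> (2 * d) = y [^]\<^bsub>K\<^esub> (2 * d - 1)"
  proof -
    have "y [^]\<^bsub>K\<^esub> (2 * d) = y \<otimes>\<^bsub>K\<^esub> y [^]\<^bsub>K\<^esub> (2 * d - 1)"
      using y d(1) K.nat_pow_Suc2[of y "2 * d - 1"] by (simp add: Suc_diff_1)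
    then show ?thesis using y by (simp add: K.m_assoc[symmetric])
  qed
  ultimately show thesis using d(1) by (intro that[of "2 * d - 1"]) auto
qed

lemma totally_bounded_group_inv_mem_closed_of_powers:
  assumes tb: "totally_bounded_group K S" and F: "closedin S F" and y: "y \<in> carrier K"
    and powers: "\<And>m::nat. m \<ge> 1 \<Longrightarrow> y [^]\<^bsub>K\<^esub> m \<in> F"
  shows "inv\<^bsub>K\<^esub> y \<in> F"
proof (rule ccontr)
  assume "inv\<^bsub>K\<^esub> y \<notin> F"
  moreover have "inv\<^bsub>K\<^esub> y \<in> topspace S" and "group K"
    using tb y by (auto simp: totally_bounded_group_def topological_group_def
        paratopological_group_def group.inv_closed)
  ultimately have "inv\<^bsub>K\<^esub> y \<in> topspace S - F" by blast
  with F obtain m :: nat where "m \<ge> 1" "y [^]\<^bsub>K\<^esub> m \<in> topspace S - F"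
    using totally_bounded_group_power_in_nbhd_of_inverse[OF tb y] by (metis openin_diff openin_topspace)
  with powers show False by blast
qed

lemma topological_group_if_inverse_continuous_at_one:
  assumes pg: "paratopological_group G T"
    and at_one: "\<And>U. nbhd T \<one>\<^bsub>G\<^esub> U \<Longrightarrow> \<exists>W. nbhd T \<one>\<^bsub>G\<^esub> W \<and> (\<forall>w\<in>W. inv\<^bsub>G\<^esub> w \<in> U)"
  shows "topological_group G T"
proof -
  interpret G: group G using pg by (simp add: paratopological_group_def)
  have ts: "topspace T = carrier G" using pg by (simp add: paratopological_group_def)
  have "openin T {x \<in> topspace T. inv\<^bsub>G\<^esub> x \<in> U}" if U: "openin T U" for U
  proof (subst openin_subopen, intro ballI)
    fix x assume "x \<in> {x \<in> topspace T. inv\<^bsub>G\<^esub> x \<in> U}"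
    then have x: "x \<in> carrier G" "inv\<^bsub>G\<^esub> x \<in> U" using ts by auto
    define U1 where "U1 = {g \<in> topspace T. g \<otimes>\<^bsub>G\<^esub> inv\<^bsub>G\<^esub> x \<in> U}"
    have "openin T U1"
      unfolding U1_def by (rule openin_preimage_translation(2)[OF pg G.inv_closed[OF x(1)] U])
    moreover have "\<one>\<^bsub>G\<^esub> \<in> U1" using x ts by (simp add: U1_def)
    ultimately have "nbhd T \<one>\<^bsub>G\<^esub> U1" by (simp add: nbhd_def openin_subset interior_of_openin)
    then obtain W where W: "nbhd T \<one>\<^bsub>G\<^esub> W" "\<forall>w\<in>W. inv\<^bsub>G\<^esub> w \<in> U1"
      using at_one by blast
    \<comment> \<open>\<open>N = x \<cdot> int W\<close>; for \<open>z = x w\<close> one has \<open>z\<inverse> = w\<inverse> x\<inverse> \<in> U\<close>.\<close>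
    define N where "N = {z \<in> topspace T. inv\<^bsub>G\<^esub> x \<otimes>\<^bsub>G\<^esub> z \<in> T interior_of W}"
    have "openin T N"
      unfolding N_def by (rule openin_preimage_translation(1)[OF pg G.inv_closed[OF x(1)]]) simp
    moreover have "x \<in> N" using W(1) x ts by (simp add: N_def nbhd_def)
    moreover have "inv\<^bsub>G\<^esub> z \<in> U" if z: "z \<in> N" for z
    proof -
      have zc: "z \<in> carrier G" and "inv\<^bsub>G\<^esub> x \<otimes>\<^bsub>G\<^esub> z \<in> W"
        using z ts interior_of_subset[of T W] by (auto simp: N_def)
      then have "inv\<^bsub>G\<^esub> (inv\<^bsub>G\<^esub> x \<otimes>\<^bsub>G\<^esub> z) \<otimes>\<^bsub>G\<^esub> inv\<^bsub>G\<^esub> x \<in> U"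
        using W(2) by (simp add: U1_def)
      then show ?thesis using x zc by (simp add: G.inv_mult_group G.m_assoc)
    qed
    ultimately show "\<exists>N. openin T N \<and> x \<in> N \<and> N \<subseteq> {x \<in> topspace T. inv\<^bsub>G\<^esub> x \<in> U}"
      using openin_subset by blast
  qed
  then have "continuous_map T T (\<lambda>x. inv\<^bsub>G\<^esub> x)"
    by (simp add: continuous_map_def ts)
  with pg show ?thesis by (simp add: topological_group_def)
qed

lemma bohr_regular_lawson_inverse_continuous_at_one:
  assumes br: "bohr_regular_via G T K S h" and lawson: "lawson_group G T"
    and U: "nbhd T \<one>\<^bsub>G\<^esub> U"
  shows "\<exists>W. nbhd T \<one>\<^bsub>G\<^esub> W \<and> (\<forall>w\<in>W. inv\<^bsub>G\<^esub> w \<in> U)"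
proof -
  have pg: "paratopological_group G T" and tb: "totally_bounded_group K S"
    and hom: "h \<in> hom G K" and rm: "regular_map T S h"
    using br by (auto simp: bohr_regular_via_def)
  interpret G: group G using pg by (simp add: paratopological_group_def)
  interpret K: group K
    using tb by (simp add: totally_bounded_group_def topological_group_def paratopological_group_def)
  interpret h: group_hom G K h by unfold_locales (rule hom)
  have ts: "topspace T = carrier G" using pg by (simp add: paratopological_group_def)
  define H where "H F = {z \<in> topspace T. h z \<in> F}" for F
  obtain F where F: "closedin S F" "nbhd T \<one>\<^bsub>G\<^esub> (H F)" "H F \<subseteq> U"
    using rm U G.one_closed unfolding regular_map_def H_def ts by blast
  obtain W where W: "nbhd T \<one>\<^bsub>G\<^esub> W" "W \<subseteq> H F" "\<forall>x\<in>W. \<forall>y\<in>W. x \<otimes>\<^bsub>G\<^esub> y \<in> W"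
    using lawson F(2) unfolding lawson_group_def by blast
  have W_carrier: "W \<subseteq> carrier G" using W(1) by (simp add: nbhd_def ts)
  have "inv\<^bsub>G\<^esub> w \<in> U" if w: "w \<in> W" for w
  proof -
    have wc: "w \<in> carrier G" using w W_carrier by blast
    have "h w [^]\<^bsub>K\<^esub> m \<in> F" if "m \<ge> 1" for m :: nat
    proof -
      have "w [^]\<^bsub>G\<^esub> m \<in> H F"
        using G.nat_pow_in_subsemigroup[OF W_carrier W(3) w that] W(2) by blast
      then show ?thesis using h.hom_nat_pow[OF wc] by (simp add: H_def)
    qed
    then have "inv\<^bsub>K\<^esub> h w \<in> F"
      using totally_bounded_group_inv_mem_closed_of_powers[OF tb F(1)] wc by simp
    then have "inv\<^bsub>G\<^esub> w \<in> H F" using wc ts by (simp add: H_def)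
    then show ?thesis using F(3) by blast
  qed
  then show ?thesis using W(1) by blast
qed

theorem corollary8:
  fixes G :: "'a monoid" and T :: "'a topology"
  assumes "\<exists>(K :: 'b monoid) S h. bohr_regular_via G T K S h"
    and "lawson_group G T"
  shows "topological_group G T"
proof -
  obtain K :: "'b monoid" and S h where br: "bohr_regular_via G T K S h"
    using assms(1) by blast
  have "paratopological_group G T" using br by (simp add: bohr_regular_via_def)
  then show ?thesis
    using bohr_regular_lawson_inverse_continuous_at_one[OF br assms(2)]
    by (rule topological_group_if_inverse_continuous_at_one)
qed

end
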